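(* For every positive integer $n$, \[ \mathcal{A}_n(u,v;x_1,\ldots,x_n)=\frac{\det_{1\le i,j\le n}\big(x_i^{\,n-j}p_j(x_i)\big)}{\prod_{1\le i<j\le n}(x_i-x_j)},\qquad p_j(x)=\sum_{k=0}^{j-1}x^k(-1+u+v-ux)^k v^{\,j-1-k}. \]
   Context: $\mathrm{ASym}_{x_1,\ldots,x_n} f=\sum_{\sigma\in S_n}\mathrm{sgn}(\sigma) f(x_{\sigma(1)},\ldots,x_{\sigma(n)})$, and \[ \mathcal{A}_n(u,v;x_1,\ldots,x_n)=\frac{\mathrm{ASym}_{x_1,\ldots,x_n}\Big[\prod_{i=1}^n x_i^{i-1}\prod_{1\le i<j\le n}\big(v+(1-u-v)x_i+u x_i x_j\big)\Big]}{\prod_{1\le i<j\le n}(x_j-x_i)}. \] *)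

theory Defs
  imports "Jordan_Normal_Form.Determinant"
begin

definition ASym :: "nat \<Rightarrow> ((nat \<Rightarrow> 'a) \<Rightarrow> 'a) \<Rightarrow> (nat \<Rightarrow> 'a) \<Rightarrow> 'a::comm_ring_1" where
  "ASym n f x = (\<Sum>\<sigma> | \<sigma> permutes {1..n}. of_int (sign \<sigma>) * f (\<lambda>i. x (\<sigma> i)))"

definition calA :: "nat \<Rightarrow> 'a \<Rightarrow> 'a \<Rightarrow> (nat \<Rightarrow> 'a) \<Rightarrow> 'a::field" where
  "calA n u v x =
     ASym n (\<lambda>y. (\<Prod>i=1..n. y i ^ (i - 1)) *
                  (\<Prod>i=1..n. \<Prod>j=i+1..n. v + (1 - u - v) * y i + u * y i * y j)) x
     / (\<Prod>i=1..n. \<Prod>j=i+1..n. (x j - x i))"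

definition pj :: "'a \<Rightarrow> 'a \<Rightarrow> nat \<Rightarrow> 'a \<Rightarrow> 'a::comm_ring_1" where
  "pj u v j t = (\<Sum>k=0..j-1. t ^ k * (-1 + u + v - u * t) ^ k * v ^ (j - 1 - k))"

end

theory Submission
  imports Defs
begin

text \<open>
  Absorbing the powers \<open>y j ^ (j - 1)\<close> into the double product turns the numerator of
  \<open>calA\<close> into \<open>\<Sum>\<sigma>. sgn \<sigma> * (\<Prod>i<j. v * y (\<sigma> j) - a (\<sigma> j) * y (\<sigma> i))\<close> with
  \<open>a k = y k * (-1 + u + v - u * y k)\<close>, and \<open>pj u v j (y k)\<close> is the complete homogeneous
  polynomial \<open>hsum v j (a k)\<close> of degree \<open>j - 1\<close> in \<open>a k\<close> and \<open>v\<close>. Up to reversing the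
  columns and the sign of the Vandermonde product it therefore suffices to show that this
  alternating sum is \<open>det (y i ^ j * hsum v (n - j) (a i))\<close>. This goes by induction on
  \<open>n\<close>: grouping the permutations by their value \<open>k\<close> at the last position leaves the factor
  \<open>\<Prod>l\<noteq>k. v * y k - a k * y l\<close>. Expanded in the functions \<open>y k ^ (n - s) * hsum v s (a k)\<close>,
  its top term gives the Laplace expansion of the determinant along the first column, while
  all lower coefficients are coefficients of \<open>\<Prod>l. v - y l * T\<close> and so do not depend on \<open>k\<close>;
  the lower terms are thus Laplace expansions of matrices with two equal columns and vanish.
\<close>

definition hsum :: "'a::comm_ring_1 \<Rightarrow> nat \<Rightarrow> 'a \<Rightarrow> 'a" where
  "hsum v m a = (\<Sum>k<m. a ^ k * v ^ (m - 1 - k))"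

lemma hsum_Suc: "hsum v (Suc m) a = v * hsum v m a + a ^ m"
proof -
  have "hsum v (Suc m) a = (\<Sum>k<m. a ^ k * v ^ (m - k)) + a ^ m"
    unfolding hsum_def by simp
  also have "(\<Sum>k<m. a ^ k * v ^ (m - k)) = v * hsum v m a"
    unfolding hsum_def sum_distrib_left
  proof (rule sum.cong)
    fix k assume "k \<in> {..<m}"
    then have "m - k = Suc (m - Suc k)" by auto
    then show "a ^ k * v ^ (m - k) = v * (a ^ k * v ^ (m - 1 - k))"
      by (simp add: mult.left_commute)
  qed simp
  finally show ?thesis .
qed

lemma pj_eq_hsum: "pj u v (Suc j) t = hsum v (Suc j) (t * (-1 + u + v - u * t))"
  unfolding pj_def hsum_def
  by (simp add: atLeast0AtMost lessThan_Suc_atMost[symmetric] power_mult_distrib mult.assoc)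

text \<open>Summation by parts against \<open>a\<^sup>k = hsum v (k + 1) a - v * hsum v k a\<close>.\<close>

lemma sum_powers_hsum_expansion:
  fixes b :: "nat \<Rightarrow> 'a::comm_ring_1"
  shows "(\<Sum>k\<le>n. b k * a ^ k * t ^ (n - k)) =
    b n * hsum v (Suc n) a - (\<Sum>s\<in>{1..n}. (v * b s - t * b (s - 1)) * t ^ (n - s) * hsum v s a)"
proof (induction n)
  case 0
  then show ?case by (simp add: hsum_def)
next
  case (Suc n)
  let ?S = "\<lambda>n. \<Sum>s\<in>{1..n}. (v * b s - t * b (s - 1)) * t ^ (n - s) * hsum v s a"
  have "(\<Sum>k\<le>Suc n. b k * a ^ k * t ^ (Suc n - k)) =
      t * (\<Sum>k\<le>n. b k * a ^ k * t ^ (n - k)) + b (Suc n) * a ^ Suc n"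
    by (simp add: sum_distrib_left Suc_diff_le mult.left_commute)
  also have "\<dots> = t * (b n * hsum v (Suc n) a - ?S n) + b (Suc n) * a ^ Suc n"
    using Suc by simp
  also have "?S (Suc n) = t * ?S n + (v * b (Suc n) - t * b n) * hsum v (Suc n) a"
    by (simp add: sum_distrib_left Suc_diff_le mult.left_commute mult.assoc)
  ultimately show ?case
    by (simp add: hsum_Suc[of v "Suc n"] algebra_simps)
qed

definition lin_prod :: "'a::comm_ring_1 \<Rightarrow> (nat \<Rightarrow> 'a) \<Rightarrow> nat \<Rightarrow> 'a poly" where
  "lin_prod v y m = (\<Prod>l<m. [:v, - y l:])"

lemma coeff_linear_mult_0: "coeff ([:c, d:] * q) 0 = c * coeff q 0"
  by (simp add: mult_pCons_left)

lemma coeff_linear_mult_Suc: "coeff ([:c, d:] * q) (Suc s) = c * coeff q (Suc s) + d * coeff q s"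
  by (simp add: mult_pCons_left coeff_pCons)

lemma lin_prod_Suc: "lin_prod v y (Suc m) = [:v, - y m:] * lin_prod v y m"
  by (simp add: lin_prod_def mult.commute)

lemma coeff_lin_prod_eq_0: "m < k \<Longrightarrow> coeff (lin_prod v y m) k = 0"
proof (induction m arbitrary: k)
  case 0
  then show ?case by (simp add: lin_prod_def coeff_1)
next
  case (Suc m)
  then obtain k' where "k = Suc k'" by (cases k) auto
  with Suc show ?case by (simp add: lin_prod_Suc coeff_linear_mult_Suc)
qed

lemma coeff_lin_prod_top: "coeff (lin_prod v y m) m = (-1) ^ m * (\<Prod>l<m. y l)"
proof (induction m)
  case 0
  then show ?case by (simp add: lin_prod_def)
next
  case (Suc m)
  then show ?case by (simp add: lin_prod_Suc coeff_linear_mult_Suc coeff_lin_prod_eq_0)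
qed

lemma prod_diff_eq_lin_prod_coeffs:
  "(\<Prod>l<m. v * t - a * y l) = (\<Sum>k\<le>m. coeff (lin_prod v y m) k * a ^ k * t ^ (m - k))"
proof (induction m)
  case 0
  then show ?case by (simp add: lin_prod_def)
next
  case (Suc m)
  let ?q = "coeff (lin_prod v y m)"
  have "(\<Prod>l<Suc m. v * t - a * y l) = (\<Sum>k\<le>m. ?q k * a ^ k * t ^ (m - k)) * (v * t - a * y m)"
    using Suc by simp
  also have "\<dots> = (\<Sum>k\<le>m. v * ?q k * a ^ k * t ^ (Suc m - k))
                 - (\<Sum>k\<le>m. y m * ?q k * a ^ Suc k * t ^ (m - k))"
    unfolding sum_distrib_right right_diff_distrib sum_subtractf[symmetric]
    by (rule sum.cong) (auto simp: Suc_diff_le algebra_simps)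
  also have "(\<Sum>k\<le>m. v * ?q k * a ^ k * t ^ (Suc m - k)) =
      (\<Sum>k\<le>Suc m. v * ?q k * a ^ k * t ^ (Suc m - k))"
    by (simp add: coeff_lin_prod_eq_0)
  also have "(\<Sum>k\<le>m. y m * ?q k * a ^ Suc k * t ^ (m - k)) =
      (\<Sum>k\<le>Suc m. (if k = 0 then 0 else y m * ?q (k - 1)) * a ^ k * t ^ (Suc m - k))"
    unfolding sum.atMost_Suc_shift by simp
  also have "(\<Sum>k\<le>Suc m. v * ?q k * a ^ k * t ^ (Suc m - k))
      - (\<Sum>k\<le>Suc m. (if k = 0 then 0 else y m * ?q (k - 1)) * a ^ k * t ^ (Suc m - k))
      = (\<Sum>k\<le>Suc m. coeff (lin_prod v y (Suc m)) k * a ^ k * t ^ (Suc m - k))"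
    unfolding sum_subtractf[symmetric]
  proof (rule sum.cong[OF refl])
    fix k
    show "v * ?q k * a ^ k * t ^ (Suc m - k) - (if k = 0 then 0 else y m * ?q (k - 1)) * a ^ k * t ^ (Suc m - k)
        = coeff (lin_prod v y (Suc m)) k * a ^ k * t ^ (Suc m - k)"
      by (cases k) (simp_all add: lin_prod_Suc coeff_linear_mult_Suc coeff_linear_mult_0 algebra_simps)
  qed
  finally show ?case .
qed

lemma lin_prod_remove:
  assumes "k < Suc n"
  shows "lin_prod v y (Suc n) = [:v, - y k:] * lin_prod v (\<lambda>l. y (insert_index k l)) n"
proof -
  have "lin_prod v y (Suc n) = (\<Prod>l\<in>insert k ({0..<Suc n} - {k}). [:v, - y l:])"
    unfolding lin_prod_def using assms by (intro prod.cong) auto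
  also have "\<dots> = [:v, - y k:] * (\<Prod>l\<in>{0..<Suc n} - {k}. [:v, - y l:])"
    by (rule prod.insert) auto
  also have "{0..<Suc n} - {k} = insert_index k ` {0..<n}"
    using insert_index_image[OF assms] by simp
  also have "(\<Prod>l\<in>insert_index k ` {0..<n}. [:v, - y l:]) = (\<Prod>l<n. [:v, - y (insert_index k l):])"
    by (subst prod.reindex) (auto simp: inj_on_def insert_index_def atLeast0LessThan)
  finally show ?thesis
    unfolding lin_prod_def .
qed

text \<open>
  The coefficients of \<open>lin_prod v y (Suc n)\<close> do not depend on which point \<open>y k\<close> is
  singled out; this is what makes the lower terms of the induction step cancel.
\<close>

lemma prod_diff_hsum_expansion:
  assumes k: "k < Suc n"
  shows "(-1) ^ n * (\<Prod>l<n. v * y k - a * y (insert_index k l)) =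
    (\<Prod>l<n. y (insert_index k l)) * hsum v (Suc n) a
    - (-1) ^ n * (\<Sum>s\<in>{1..n}. coeff (lin_prod v y (Suc n)) s * (y k ^ (n - s) * hsum v s a))"
proof -
  define b where "b = coeff (lin_prod v (\<lambda>l. y (insert_index k l)) n)"
  define P where "P = (\<Prod>l<n. y (insert_index k l))"
  let ?E = "\<Prod>l<n. v * y k - a * y (insert_index k l)"
  let ?S = "\<Sum>s\<in>{1..n}. coeff (lin_prod v y (Suc n)) s * (y k ^ (n - s) * hsum v s a)"
  have coeff_remove: "coeff (lin_prod v y (Suc n)) s = v * b s - y k * b (s - 1)" if "s \<in> {1..n}" for s
  proof -
    from that obtain s' where "s = Suc s'" by (cases s) auto
    then show ?thesis
      unfolding lin_prod_remove[OF k] b_def coeff_linear_mult_Suc by simp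
  qed
  have "?E = (\<Sum>s\<le>n. b s * a ^ s * y k ^ (n - s))"
    unfolding b_def by (rule prod_diff_eq_lin_prod_coeffs)
  also have "\<dots> = b n * hsum v (Suc n) a
      - (\<Sum>s\<in>{1..n}. (v * b s - y k * b (s - 1)) * y k ^ (n - s) * hsum v s a)"
    by (rule sum_powers_hsum_expansion)
  also have "(\<Sum>s\<in>{1..n}. (v * b s - y k * b (s - 1)) * y k ^ (n - s) * hsum v s a) = ?S"
    by (rule sum.cong) (auto simp: coeff_remove mult.assoc)
  also have "b n = (-1) ^ n * P"
    unfolding b_def P_def coeff_lin_prod_top ..
  finally have "(-1) ^ n * ?E = ((-1) ^ n * (-1) ^ n) * P * hsum v (Suc n) a - (-1) ^ n * ?S"
    by (simp add: right_diff_distrib mult.assoc)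
  also have "(-1) ^ n * (-1) ^ n = (1::'a)"
    by (simp flip: power_mult_distrib)
  finally show ?thesis
    unfolding P_def by simp
qed

definition hmat :: "'a::comm_ring_1 \<Rightarrow> nat \<Rightarrow> (nat \<Rightarrow> 'a) \<Rightarrow> (nat \<Rightarrow> 'a) \<Rightarrow> 'a mat" where
  "hmat v n y a = mat n n (\<lambda>(i, j). y i ^ j * hsum v (n - j) (a i))"

lemma det_scale_rows:
  "det (mat n n (\<lambda>(i, j). f i * g i j)) = (\<Prod>i<n. f i) * det (mat n n (\<lambda>(i, j). g i j :: 'a::comm_ring_1))"
proof -
  have "det (mat n n (\<lambda>(i, j). f i * g i j)) =
      (\<Sum>p\<in>{p. p permutes {0..<n}}. signof p * (\<Prod>i=0..<n. f i * g i (p i)))"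
    by (subst det_def') (auto intro!: sum.cong prod.cong)
  also have "\<dots> = (\<Sum>p\<in>{p. p permutes {0..<n}}. (\<Prod>i<n. f i) * (signof p * (\<Prod>i=0..<n. g i (p i))))"
    by (rule sum.cong) (auto simp: prod.distrib atLeast0LessThan)
  also have "\<dots> = (\<Prod>i<n. f i) * det (mat n n (\<lambda>(i, j). g i j))"
    by (subst det_def'[of _ n]) (auto simp: sum_distrib_left intro!: sum.cong prod.cong)
  finally show ?thesis .
qed

lemma det_hmat_Suc:
  "det (hmat v (Suc n) y a) =
    (\<Sum>i<Suc n. hsum v (Suc n) (a i) * ((-1) ^ i * ((\<Prod>l<n. y (insert_index i l)) *
       det (hmat v n (\<lambda>l. y (insert_index i l)) (\<lambda>l. a (insert_index i l))))))"
proof -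
  have "det (hmat v (Suc n) y a) = (\<Sum>i<Suc n. hmat v (Suc n) y a $$ (i, 0) * cofactor (hmat v (Suc n) y a) i 0)"
    by (rule laplace_expansion_column) (auto simp: hmat_def)
  also have "\<dots> = (\<Sum>i<Suc n. hsum v (Suc n) (a i) * ((-1) ^ i * ((\<Prod>l<n. y (insert_index i l)) *
       det (hmat v n (\<lambda>l. y (insert_index i l)) (\<lambda>l. a (insert_index i l))))))"
  proof (rule sum.cong[OF refl])
    fix i assume i: "i \<in> {..<Suc n}"
    let ?y = "\<lambda>l. y (insert_index i l)" and ?a = "\<lambda>l. a (insert_index i l)"
    have "mat_delete (hmat v (Suc n) y a) i 0 = mat n n (\<lambda>(l, j). ?y l * (?y l ^ j * hsum v (n - j) (?a l)))"
      unfolding hmat_def mat_delete_def by (rule eq_matI) (auto simp: insert_index_def)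
    then have "det (mat_delete (hmat v (Suc n) y a) i 0) = (\<Prod>l<n. ?y l) * det (hmat v n ?y ?a)"
      unfolding hmat_def by (simp add: det_scale_rows)
    then show "hmat v (Suc n) y a $$ (i, 0) * cofactor (hmat v (Suc n) y a) i 0 =
        hsum v (Suc n) (a i) * ((-1) ^ i * ((\<Prod>l<n. ?y l) * det (hmat v n ?y ?a)))"
      using i unfolding cofactor_def by (simp add: hmat_def)
  qed
  finally show ?thesis .
qed

text \<open>The Laplace expansion along the last column of a matrix whose last column repeats column \<open>j\<close>.\<close>

lemma hmat_cofactor_sum_eq_0:
  assumes "j < n"
  shows "(\<Sum>i<Suc n. (y i ^ j * hsum v (n - j) (a i)) *
    ((-1) ^ (i + n) * det (hmat v n (\<lambda>l. y (insert_index i l)) (\<lambda>l. a (insert_index i l))))) = 0"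
proof -
  let ?M = "mat (Suc n) (Suc n) (\<lambda>(i, j'). y i ^ (if j' = n then j else j') * hsum v (n - (if j' = n then j else j')) (a i))"
  have "det ?M = (\<Sum>i<Suc n. ?M $$ (i, n) * cofactor ?M i n)"
    by (rule laplace_expansion_column) auto
  also have "\<dots> = (\<Sum>i<Suc n. (y i ^ j * hsum v (n - j) (a i)) *
      ((-1) ^ (i + n) * det (hmat v n (\<lambda>l. y (insert_index i l)) (\<lambda>l. a (insert_index i l)))))"
  proof (rule sum.cong[OF refl])
    fix i assume "i \<in> {..<Suc n}"
    moreover have "mat_delete ?M i n = hmat v n (\<lambda>l. y (insert_index i l)) (\<lambda>l. a (insert_index i l))"
      unfolding hmat_def mat_delete_def by (rule eq_matI) (auto simp: insert_index_def)
    ultimately show "?M $$ (i, n) * cofactor ?M i n = (y i ^ j * hsum v (n - j) (a i)) *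
        ((-1) ^ (i + n) * det (hmat v n (\<lambda>l. y (insert_index i l)) (\<lambda>l. a (insert_index i l))))"
      unfolding cofactor_def by simp
  qed
  finally show ?thesis
    using det_identical_columns[of ?M "Suc n" j n] assms by (auto intro!: eq_vecI)
qed

definition antisym_prod :: "nat \<Rightarrow> (nat \<Rightarrow> nat \<Rightarrow> 'a::comm_ring_1) \<Rightarrow> 'a" where
  "antisym_prod n F = (\<Sum>\<sigma> | \<sigma> permutes {0..<n}. signof \<sigma> * (\<Prod>j<n. \<Prod>i<j. F (\<sigma> i) (\<sigma> j)))"

lemma permutation_insert_less: "i < n \<Longrightarrow> permutation_insert n k q i = insert_index k (q i)"
  unfolding permutation_insert_def insert_dom_def insert_ran_def by simp

lemma antisym_prod_term_permutation_insert:
  assumes q: "q permutes {0..<n}" and k: "k < Suc n"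
  shows "signof (permutation_insert n k q) *
      (\<Prod>j<Suc n. \<Prod>i<j. F (permutation_insert n k q i) (permutation_insert n k q j)) =
    (-1) ^ (n + k) * (\<Prod>l<n. F (insert_index k l) k) *
      (signof q * (\<Prod>j<n. \<Prod>i<j. F (insert_index k (q i)) (insert_index k (q j))))"
proof -
  let ?p = "permutation_insert n k q"
  have split_last: "(\<Prod>j<Suc n. \<Prod>i<j. F (?p i) (?p j)) =
      (\<Prod>j<n. \<Prod>i<j. F (?p i) (?p j)) * (\<Prod>i<n. F (?p i) (?p n))"
    by simp
  have inner: "(\<Prod>j<n. \<Prod>i<j. F (?p i) (?p j)) =
      (\<Prod>j<n. \<Prod>i<j. F (insert_index k (q i)) (insert_index k (q j)))"
    by (intro prod.cong refl) (auto simp: permutation_insert_less)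
  have "(\<Prod>i<n. F (?p i) (?p n)) = (\<Prod>i<n. F (insert_index k (q i)) k)"
    by (intro prod.cong refl) (auto simp: permutation_insert_less)
  also have "\<dots> = (\<Prod>i<n. F (insert_index k i) k)"
    using prod.permute[OF q, of "\<lambda>i. F (insert_index k i) k"] by (simp add: atLeast0LessThan o_def)
  finally have last: "(\<Prod>i<n. F (?p i) (?p n)) = (\<Prod>i<n. F (insert_index k i) k)" .
  have sign: "signof ?p = (-1) ^ (n + k) * signof q"
    by (rule signof_permutation_insert[OF q]) (use k in auto)
  show ?thesis
    unfolding split_last inner last sign by (simp add: ac_simps)
qed

lemma antisym_prod_Suc:
  "antisym_prod (Suc n) F = (\<Sum>k<Suc n. (-1) ^ (n + k) * (\<Prod>l<n. F (insert_index k l) k) *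
    antisym_prod n (\<lambda>a b. F (insert_index k a) (insert_index k b)))"
proof -
  define N where "N = {0..<Suc n}"
  define h where "h = (\<lambda>p. signof p * (\<Prod>j<Suc n. \<Prod>i<j. F (p i) (p j)) :: 'a)"
  have "antisym_prod (Suc n) F = sum h {p. p permutes N}"
    unfolding antisym_prod_def h_def N_def ..
  also have "{p. p permutes N} = (\<Union>k\<in>N. {p. p permutes N \<and> p n = k})"
    unfolding N_def using permutes_in_image by fastforce
  also have "sum h \<dots> = (\<Sum>k\<in>N. sum h {p. p permutes N \<and> p n = k})"
    by (rule sum.UNION_disjoint) (auto simp: N_def finite_permutations)
  also have "\<dots> = (\<Sum>k\<in>N. (-1) ^ (n + k) * (\<Prod>l<n. F (insert_index k l) k) *
      antisym_prod n (\<lambda>a b. F (insert_index k a) (insert_index k b)))"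
  proof (rule sum.cong[OF refl])
    fix k assume "k \<in> N"
    then have k: "k < Suc n" by (simp add: N_def)
    have "sum h {p. p permutes N \<and> p n = k} = sum (h \<circ> permutation_insert n k) {q. q permutes {0..<n}}"
      unfolding N_def permutation_fix[of n n k, OF lessI k]
      by (rule sum.reindex) (rule permutation_insert_inj_on; use k in simp)
    also have "\<dots> = (-1) ^ (n + k) * (\<Prod>l<n. F (insert_index k l) k) *
        antisym_prod n (\<lambda>a b. F (insert_index k a) (insert_index k b))"
      unfolding antisym_prod_def sum_distrib_left o_def h_def
      by (rule sum.cong[OF refl], rule antisym_prod_term_permutation_insert) (use k in auto)
    finally show "sum h {p. p permutes N \<and> p n = k} = (-1) ^ (n + k) * (\<Prod>l<n. F (insert_index k l) k) *
        antisym_prod n (\<lambda>a b. F (insert_index k a) (insert_index k b))" .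
  qed
  finally show ?thesis
    unfolding N_def atLeast0LessThan .
qed

lemma antisym_prod_eq_det_hmat:
  "antisym_prod n (\<lambda>i j. v * y j - a j * y i) = det (hmat v n y a)"
proof (induction n arbitrary: y a)
  case 0
  have "{p. p permutes {0..<0::nat}} = {id}"
    by (auto simp: permutes_empty)
  then show ?case
    by (simp add: antisym_prod_def hmat_def det_def)
next
  case (Suc n)
  define R where "R = (\<lambda>k. det (hmat v n (\<lambda>l. y (insert_index k l)) (\<lambda>l. a (insert_index k l))))"
  define P where "P = (\<lambda>k. \<Prod>l<n. y (insert_index k l))"
  define C where "C = coeff (lin_prod v y (Suc n))"
  define c where "c = (\<lambda>s k. y k ^ (n - s) * hsum v s (a k) * ((-1) ^ (k + n) * R k))"
  have "antisym_prod (Suc n) (\<lambda>i j. v * y j - a j * y i) =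
      (\<Sum>k<Suc n. (-1) ^ k * ((-1) ^ n * (\<Prod>l<n. v * y k - a k * y (insert_index k l))) * R k)"
    unfolding antisym_prod_Suc Suc.IH R_def by (simp add: power_add ac_simps)
  also have "\<dots> = (\<Sum>k<Suc n. hsum v (Suc n) (a k) * ((-1) ^ k * (P k * R k)) - (\<Sum>s\<in>{1..n}. C s * c s k))"
  proof (rule sum.cong[OF refl])
    fix k assume "k \<in> {..<Suc n}"
    then have expand: "(-1) ^ n * (\<Prod>l<n. v * y k - a k * y (insert_index k l)) =
        P k * hsum v (Suc n) (a k) - (-1) ^ n * (\<Sum>s\<in>{1..n}. C s * (y k ^ (n - s) * hsum v s (a k)))"
      unfolding P_def C_def by (intro prod_diff_hsum_expansion) simp
    show "(-1) ^ k * ((-1) ^ n * (\<Prod>l<n. v * y k - a k * y (insert_index k l))) * R k =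
        hsum v (Suc n) (a k) * ((-1) ^ k * (P k * R k)) - (\<Sum>s\<in>{1..n}. C s * c s k)"
      unfolding expand c_def
      by (simp add: algebra_simps sum_distrib_left sum_distrib_right power_add)
  qed
  also have "\<dots> = det (hmat v (Suc n) y a) - (\<Sum>s\<in>{1..n}. C s * (\<Sum>k<Suc n. c s k))"
    unfolding sum_subtractf det_hmat_Suc P_def R_def sum_distrib_left
    by (subst sum.swap) (rule refl)
  also have "(\<Sum>s\<in>{1..n}. C s * (\<Sum>k<Suc n. c s k)) = 0"
  proof (rule sum.neutral, rule ballI)
    fix s assume s: "s \<in> {1..n}"
    then have "(\<Sum>k<Suc n. c s k) = (\<Sum>k<Suc n. (y k ^ (n - s) * hsum v (n - (n - s)) (a k)) *
        ((-1) ^ (k + n) * det (hmat v n (\<lambda>l. y (insert_index k l)) (\<lambda>l. a (insert_index k l)))))"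
      by (simp add: c_def R_def)
    also have "\<dots> = 0"
      by (rule hmat_cofactor_sum_eq_0) (use s in auto)
    finally show "C s * (\<Sum>k<Suc n. c s k) = 0"
      by simp
  qed
  finally show ?case
    by simp
qed

lemma prod_upper_triangle_shift:
  fixes g :: "nat \<Rightarrow> nat \<Rightarrow> 'a::comm_monoid_mult"
  shows "(\<Prod>i=1..n. \<Prod>j=i+1..n. g i j) = (\<Prod>j<n. \<Prod>i<j. g (Suc i) (Suc j))"
proof (induction n)
  case 0
  then show ?case by simp
next
  case (Suc n)
  have "(\<Prod>i=1..Suc n. \<Prod>j=i+1..Suc n. g i j) = (\<Prod>i=1..n. (\<Prod>j=i+1..n. g i j) * g i (Suc n))"
    by (auto intro!: prod.cong)
  also have "\<dots> = (\<Prod>i=1..n. \<Prod>j=i+1..n. g i j) * (\<Prod>i<n. g (Suc i) (Suc n))"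
    by (simp add: prod.distrib prod.atLeast1_atMost_eq)
  finally show ?case
    using Suc by simp
qed

lemma prod_powers_shift: "(\<Prod>i=1..n. (y i :: 'a::comm_monoid_mult) ^ (i - 1)) = (\<Prod>j<n. y (Suc j) ^ j)"
  by (simp add: prod.atLeast1_atMost_eq)

lemma prod_upper_triangle_diff_swap:
  fixes x :: "nat \<Rightarrow> 'a::comm_ring_1"
  shows "(\<Prod>i=1..n. \<Prod>j=i+1..n. x i - x j) = (-1) ^ (\<Sum>j<n. j) * (\<Prod>i=1..n. \<Prod>j=i+1..n. x j - x i)"
  unfolding prod_upper_triangle_shift
proof (induction n)
  case 0
  then show ?case by simp
next
  case (Suc n)
  have "(\<Prod>i<n. x (Suc i) - x (Suc n)) = (-1) ^ n * (\<Prod>i<n. x (Suc n) - x (Suc i))"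
    using prod_uminus[of "\<lambda>i. x (Suc n) - x (Suc i)" "{..<n}"] by simp
  with Suc show ?case
    by (simp add: power_add)
qed

lemma ASym_shift:
  fixes g :: "(nat \<Rightarrow> 'a) \<Rightarrow> 'a::comm_ring_1"
  shows "ASym n (\<lambda>y. g (\<lambda>k. y (Suc k))) x =
    (\<Sum>\<tau> | \<tau> permutes {0..<n}. signof \<tau> * g (\<lambda>k. x (Suc (\<tau> k))))"
proof -
  define \<Phi> where "\<Phi> = (\<lambda>\<tau>::nat \<Rightarrow> nat. \<lambda>i. if i \<in> {1..n} then Suc (\<tau> (inv_into {0..<n} Suc i)) else i)"
  have "bij_betw Suc {0..<n} {1..n}"
    by (auto simp: bij_betw_def image_Suc_atLeastLessThan)
  then have bij: "bij_betw \<Phi> {\<tau>. \<tau> permutes {0..<n}} {\<sigma>. \<sigma> permutes {1..n}}"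
    unfolding \<Phi>_def by (rule bij_betw_permutations)
  have "ASym n (\<lambda>y. g (\<lambda>k. y (Suc k))) x =
      (\<Sum>\<sigma> | \<sigma> permutes {1..n}. of_int (sign \<sigma>) * g (\<lambda>k. x (\<sigma> (Suc k))))"
    unfolding ASym_def ..
  also have "\<dots> = (\<Sum>\<tau> | \<tau> permutes {0..<n}. of_int (sign (\<Phi> \<tau>)) * g (\<lambda>k. x (\<Phi> \<tau> (Suc k))))"
    by (rule sum.reindex_bij_betw[symmetric, OF bij])
  also have "\<dots> = (\<Sum>\<tau> | \<tau> permutes {0..<n}. signof \<tau> * g (\<lambda>k. x (Suc (\<tau> k))))"
  proof (rule sum.cong[OF refl])
    fix \<tau> assume "\<tau> \<in> {\<tau>. \<tau> permutes {0..<n}}"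
    then have \<tau>: "\<tau> permutes {0..<n}" by simp
    have "\<Phi> \<tau> = map_permutation {0..<n} Suc \<tau>"
      unfolding \<Phi>_def map_permutation_def restrict_id_def image_Suc_atLeastLessThan
      by (auto simp: fun_eq_iff)
    then have "sign (\<Phi> \<tau>) = sign \<tau>"
      using sign_map_permutation[of Suc "{0..<n}" \<tau>] \<tau> by simp
    moreover have "\<Phi> \<tau> (Suc k) = Suc (\<tau> k)" for k
    proof (cases "k < n")
      case True
      then have "inv_into {0..<n} Suc (Suc k) = k"
        by (intro inv_into_f_eq) auto
      with True show ?thesis by (simp add: \<Phi>_def)
    next
      case False
      then show ?thesis using permutes_not_in[OF \<tau>] by (simp add: \<Phi>_def)
    qed
    ultimately show "of_int (sign (\<Phi> \<tau>)) * g (\<lambda>k. x (\<Phi> \<tau> (Suc k))) = signof \<tau> * g (\<lambda>k. x (Suc (\<tau> k)))"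
      by simp
  qed
  finally show ?thesis .
qed

lemma ASym_calA_numerator:
  fixes u v :: "'a::comm_ring_1"
  shows "ASym n (\<lambda>y. (\<Prod>i=1..n. y i ^ (i - 1)) *
      (\<Prod>i=1..n. \<Prod>j=i+1..n. v + (1 - u - v) * y i + u * y i * y j)) x =
    det (hmat v n (\<lambda>i. x (Suc i)) (\<lambda>i. x (Suc i) * (-1 + u + v - u * x (Suc i))))"
proof -
  define W where "W = (\<lambda>s t. v * t - t * (-1 + u + v - u * t) * s)"
  have "(\<Prod>i=1..n. y i ^ (i - 1)) * (\<Prod>i=1..n. \<Prod>j=i+1..n. v + (1 - u - v) * y i + u * y i * y j) =
      (\<Prod>j<n. \<Prod>i<j. W (y (Suc i)) (y (Suc j)))" for y :: "nat \<Rightarrow> 'a"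
  proof -
    have powers: "(\<Prod>j<n. y (Suc j) ^ j) = (\<Prod>j<n. \<Prod>i<j. y (Suc j))"
      by simp
    show ?thesis
      unfolding prod_powers_shift prod_upper_triangle_shift powers prod.distrib[symmetric]
      by (intro prod.cong refl) (simp add: W_def algebra_simps)
  qed
  then have "ASym n (\<lambda>y. (\<Prod>i=1..n. y i ^ (i - 1)) *
      (\<Prod>i=1..n. \<Prod>j=i+1..n. v + (1 - u - v) * y i + u * y i * y j)) x =
      ASym n (\<lambda>y. (\<lambda>Y. \<Prod>j<n. \<Prod>i<j. W (Y i) (Y j)) (\<lambda>k. y (Suc k))) x"
    by simp
  also have "\<dots> = antisym_prod n (\<lambda>i j. v * x (Suc j) - x (Suc j) * (-1 + u + v - u * x (Suc j)) * x (Suc i))"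
    using ASym_shift[of n "\<lambda>Y. \<Prod>j<n. \<Prod>i<j. W (Y i) (Y j)" x] by (simp add: antisym_prod_def W_def)
  finally show ?thesis
    unfolding antisym_prod_eq_det_hmat .
qed

definition rev_perm :: "nat \<Rightarrow> nat \<Rightarrow> nat" where
  "rev_perm n j = (if j < n then n - 1 - j else j)"

lemma rev_perm_permutes: "rev_perm n permutes {0..<n}"
proof (rule bij_imp_permutes)
  show "bij_betw (rev_perm n) {0..<n} {0..<n}"
    by (rule bij_betw_byWitness[where f' = "rev_perm n"]) (auto simp: rev_perm_def)
qed (auto simp: rev_perm_def)

lemma rev_perm_Suc: "rev_perm (Suc n) = permutation_insert n 0 (rev_perm n)"
  by (rule ext)
    (auto simp: permutation_insert_def insert_dom_def insert_ran_def insert_index_def rev_perm_def)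

lemma signof_rev_perm: "(signof (rev_perm n) :: 'a::comm_ring_1) = (-1) ^ (\<Sum>j<n. j)"
proof (induction n)
  case 0
  have "rev_perm 0 = id"
    by (auto simp: rev_perm_def)
  then show ?case by simp
next
  case (Suc n)
  have "(signof (rev_perm (Suc n)) :: 'a) = (-1) ^ (n + 0) * signof (rev_perm n)"
    unfolding rev_perm_Suc by (rule signof_permutation_insert[OF rev_perm_permutes]) auto
  with Suc show ?case
    by (simp add: power_add mult.commute)
qed

lemma det_permute_cols:
  assumes B: "B \<in> carrier_mat n n" and p: "p permutes {0..<n}"
  shows "det (mat n n (\<lambda>(i, j). B $$ (i, p j))) = signof p * det B"
proof -
  have "det (mat n n (\<lambda>(i, j). B $$ (i, p j))) = det (transpose_mat (mat n n (\<lambda>(i, j). B $$ (i, p j))))"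
    by (rule det_transpose[symmetric]) auto
  also have "transpose_mat (mat n n (\<lambda>(i, j). B $$ (i, p j))) = mat n n (\<lambda>(i, j). transpose_mat B $$ (p i, j))"
    using B p by (auto intro!: eq_matI simp: permutes_in_image[OF p])
  also have "det \<dots> = signof p * det (transpose_mat B)"
    by (rule det_permute_rows[OF _ p]) (use B in auto)
  also have "det (transpose_mat B) = det B"
    by (rule det_transpose[OF B])
  finally show ?thesis .
qed

lemma det_reverse_cols:
  assumes "B \<in> carrier_mat n n"
  shows "det (mat n n (\<lambda>(i, j). B $$ (i, n - 1 - j))) = (-1) ^ (\<Sum>j<n. j) * det B"
proof -
  have "mat n n (\<lambda>(i, j). B $$ (i, n - 1 - j)) = mat n n (\<lambda>(i, j). B $$ (i, rev_perm n j))"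
    by (rule eq_matI) (auto simp: rev_perm_def)
  then show ?thesis
    using det_permute_cols[OF assms rev_perm_permutes] by (simp add: signof_rev_perm)
qed

theorem mainTheorem4:
  fixes n :: nat and u v :: "'a::field" and x :: "nat \<Rightarrow> 'a"
  assumes "n \<ge> 1" and "inj_on x {1..n}"
  shows "calA n u v x =
    det (mat n n (\<lambda>(i, j). x (i+1) ^ (n - (j+1)) * pj u v (j+1) (x (i+1))))
    / (\<Prod>i=1..n. \<Prod>j=i+1..n. (x i - x j))"
proof -
  define H where "H = hmat v n (\<lambda>i. x (Suc i)) (\<lambda>i. x (Suc i) * (-1 + u + v - u * x (Suc i)))"
  define s :: 'a where "s = (-1) ^ (\<Sum>j<n. j)"
  have "calA n u v x = det H / (\<Prod>i=1..n. \<Prod>j=i+1..n. x j - x i)"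
    unfolding calA_def ASym_calA_numerator H_def ..
  moreover have "det (mat n n (\<lambda>(i, j). x (i+1) ^ (n - (j+1)) * pj u v (j+1) (x (i+1)))) = s * det H"
  proof -
    have "mat n n (\<lambda>(i, j). x (i+1) ^ (n - (j+1)) * pj u v (j+1) (x (i+1))) =
        mat n n (\<lambda>(i, j). H $$ (i, n - 1 - j))"
      by (rule eq_matI) (auto simp: H_def hmat_def pj_eq_hsum Suc_diff_Suc)
    then show ?thesis
      unfolding s_def by (simp only:) (rule det_reverse_cols, simp add: H_def hmat_def)
  qed
  moreover have "(\<Prod>i=1..n. \<Prod>j=i+1..n. x i - x j) = s * (\<Prod>i=1..n. \<Prod>j=i+1..n. x j - x i)"
    unfolding s_def by (rule prod_upper_triangle_diff_swap)
  moreover have "s \<noteq> 0"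
    unfolding s_def by simp
  ultimately show ?thesis
    by simp
qed

end
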